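(* Let $M$ be a smooth 3-manifold with a smooth contact sub-Riemannian structure $(D,g)$, let $S\subset M$ be an embedded $C^2$ surface, and let $p\in S$ be a characteristic point. Near $p$ let $(X_1,X_2)$ be an oriented $g$-orthonormal frame of $D$ and $X_0$ a vector field transverse to $D$, and for $\varepsilon>0$ let $g^\varepsilon$ be the Riemannian metric for which $(\varepsilon X_0,X_1,X_2)$ is orthonormal. Then, as $\varepsilon\to0$, $$K^\varepsilon_{\mathrm{ext}}(p)=-\frac{3}{4\varepsilon^2}(c^0_{12}(p))^2+O(1).$$
   Context: A point $p\in S$ is characteristic if $T_pS=D_p$. The structure functions $c^k_{ij}$ are defined by $[X_j,X_i]=c^1_{ij}X_1+c^2_{ij}X_2+c^0_{ij}X_0$; $c^0_{12}$ is the $X_0$-coefficient of $[X_2,X_1]$. With $\overline\nabla^\varepsilon$ the Levi-Civita connection of $g^\varepsilon$ and $(X,Y)$ any frame of $TS$, the extrinsic curvature is $K^\varepsilon_{\mathrm{ext}}=\dfrac{\langle\overline\nabla^\varepsilon_X\overline\nabla^\varepsilon_YY-\overline\nabla^\varepsilon_Y\overline\nabla^\varepsilon_XY-\overline\nabla^\varepsilon_{[X,Y]}Y,X\rangle_{g^\varepsilon}}{|X|^2_{g^\varepsilon}|Y|^2_{g^\varepsilon}-\langle X,Y\rangle^2_{g^\varepsilon}}$ (the sectional curvature of $g^\varepsilon$ on the plane $TS$). *)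

theory Defs
  imports "HOL-Analysis.Analysis" "HOL-Library.Landau_Symbols"
begin

fun Ck :: "nat \<Rightarrow> ('a::real_normed_vector \<Rightarrow> 'b::real_normed_vector) \<Rightarrow> 'a set \<Rightarrow> bool" where
  "Ck 0 f S = continuous_on S f"
| "Ck (Suc k) f S = (\<exists>f'. (\<forall>x\<in>S. (f has_derivative f' x) (at x)) \<and> (\<forall>v. Ck k (\<lambda>x. f' x v) S))"

definition smooth_on :: "('a::real_normed_vector \<Rightarrow> 'b::real_normed_vector) \<Rightarrow> 'a set \<Rightarrow> bool" where
  "smooth_on f S \<longleftrightarrow> (\<forall>k. Ck k f S)"

definition embedded_C2_surface :: "(real^3) set \<Rightarrow> bool" where
  "embedded_C2_surface S \<longleftrightarrow>
     (\<forall>p\<in>S. \<exists>V (W::(real^2) set) \<phi>. open V \<and> p \<in> V \<and> open W \<and> Ck 2 \<phi> W \<and>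
        \<phi> ` W = S \<inter> V \<and> inj_on \<phi> W \<and> continuous_on (S \<inter> V) (inv_into W \<phi>) \<and>
        (\<forall>w\<in>W. inj (frechet_derivative \<phi> (at w))))"

definition tangent_space :: "(real^3) set \<Rightarrow> real^3 \<Rightarrow> (real^3) set" where
  "tangent_space S p = {v. \<exists>\<gamma>::real \<Rightarrow> real^3. \<gamma> 0 = p \<and> (\<forall>t. \<gamma> t \<in> S) \<and> (\<gamma> has_vector_derivative v) (at 0)}"

definition dird :: "(real^3 \<Rightarrow> 'b::real_normed_vector) \<Rightarrow> real^3 \<Rightarrow> real^3 \<Rightarrow> 'b" where
  "dird f x c = vector_derivative (\<lambda>t. f (x + t *\<^sub>R c)) (at 0)"

definition lie :: "(real^3 \<Rightarrow> real^3) \<Rightarrow> (real^3 \<Rightarrow> real^3) \<Rightarrow> real^3 \<Rightarrow> real^3" where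
  "lie U V = (\<lambda>x. dird V x (U x) - dird U x (V x))"

definition frame_mat :: "(real^3 \<Rightarrow> real^3) \<Rightarrow> (real^3 \<Rightarrow> real^3) \<Rightarrow> (real^3 \<Rightarrow> real^3) \<Rightarrow> real^3 \<Rightarrow> real^3^3" where
  "frame_mat X0 X1 X2 x = transpose (vector [X0 x, X1 x, X2 x])"

text \<open>Structure function c^0_12: X0-coefficient of [X2,X1].\<close>
definition c0_12 :: "(real^3 \<Rightarrow> real^3) \<Rightarrow> (real^3 \<Rightarrow> real^3) \<Rightarrow> (real^3 \<Rightarrow> real^3) \<Rightarrow> real^3 \<Rightarrow> real" where
  "c0_12 X0 X1 X2 x = (matrix_inv (frame_mat X0 X1 X2 x) *v lie X2 X1 x) $ 1"

text \<open>Gram matrix of g^eps, for which (eps X0, X1, X2) is orthonormal.\<close>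
definition g_eps :: "real \<Rightarrow> (real^3 \<Rightarrow> real^3) \<Rightarrow> (real^3 \<Rightarrow> real^3) \<Rightarrow> (real^3 \<Rightarrow> real^3) \<Rightarrow> real^3 \<Rightarrow> real^3^3" where
  "g_eps \<epsilon> X0 X1 X2 x =
     transpose (matrix_inv (frame_mat X0 X1 X2 x)) **
     (\<chi> i j. if i = j then (if i = 1 then 1 / \<epsilon>\<^sup>2 else 1) else 0) **
     matrix_inv (frame_mat X0 X1 X2 x)"

definition ip :: "(real^3 \<Rightarrow> real^3^3) \<Rightarrow> real^3 \<Rightarrow> real^3 \<Rightarrow> real^3 \<Rightarrow> real" where
  "ip G x a b = a \<bullet> (G x *v b)"

text \<open>Christoffel symbols of the metric G (Koszul formula in coordinates).\<close>
definition christoffel :: "(real^3 \<Rightarrow> real^3^3) \<Rightarrow> real^3 \<Rightarrow> real^3 \<Rightarrow> real^3 \<Rightarrow> real^3" where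
  "christoffel G x a b = matrix_inv (G x) *v
     (\<chi> k. (a \<bullet> (dird G x b *v axis k 1) + b \<bullet> (dird G x a *v axis k 1)
            - a \<bullet> (dird G x (axis k 1) *v b)) / 2)"

definition nabla :: "(real^3 \<Rightarrow> real^3^3) \<Rightarrow> (real^3 \<Rightarrow> real^3) \<Rightarrow> (real^3 \<Rightarrow> real^3) \<Rightarrow> real^3 \<Rightarrow> real^3" where
  "nabla G U V = (\<lambda>x. dird V x (U x) + christoffel G x (U x) (V x))"

definition K_ext :: "(real^3 \<Rightarrow> real^3^3) \<Rightarrow> (real^3 \<Rightarrow> real^3) \<Rightarrow> (real^3 \<Rightarrow> real^3) \<Rightarrow> real^3 \<Rightarrow> real" where
  "K_ext G X Y p =
     ip G p (nabla G X (nabla G Y Y) p - nabla G Y (nabla G X Y) p - nabla G (lie X Y) Y p) (X p)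
     / (ip G p (X p) (X p) * ip G p (Y p) (Y p) - (ip G p (X p) (Y p))\<^sup>2)"

end

theory Submission
  imports Defs
begin

text \<open>Let \<open>\<theta>0, \<theta>1, \<theta>2\<close> be the coframe dual to \<open>(X0, X1, X2)\<close>, so that
  \<open>g\<^sup>\<epsilon> = \<epsilon>\<^sup>-\<^sup>2 \<theta>0\<^sup>2 + \<theta>1\<^sup>2 + \<theta>2\<^sup>2\<close>. By the Koszul formula the Christoffel symbols of \<open>g\<^sup>\<epsilon>\<close>
  are \<open>\<epsilon>\<^sup>-\<^sup>2 \<Gamma>\<^sub>-\<^sub>2 + \<Gamma>\<^sub>0 + \<epsilon>\<^sup>2 \<Gamma>\<^sub>2\<close>, where \<open>\<Gamma>\<^sub>-\<^sub>2(a,b) = (\<theta>0(a) J b + \<theta>0(b) J a)/2\<close> and \<open>J V\<close> is the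
  horizontal vector dual to \<open>d\<theta>0(V,\<cdot>)\<close>. At a characteristic point the tangent vectors \<open>X, Y\<close> are
  horizontal. Hence \<open>\<Gamma>\<^sub>-\<^sub>2\<close> vanishes on them, the Gram determinant of \<open>g\<^sup>\<epsilon>\<close> on \<open>(X, Y)\<close> does not
  depend on \<open>\<epsilon>\<close>, and \<open>g\<^sup>\<epsilon>(R(X,Y)Y, X)\<close> is \<open>\<epsilon>\<^sup>-\<^sup>2\<close> times a constant plus \<open>O(1)\<close>. That constant
  is \<open>-3/4 d\<theta>0(X,Y)\<^sup>2\<close>. Finally \<open>d\<theta>0(X,Y) = h d\<theta>0(X1,X2)\<close>, where \<open>h\<^sup>2\<close> is that Gram
  determinant, and \<open>d\<theta>0(X1,X2) = \<theta>0([X2,X1]) = c\<^sup>0\<^sub>1\<^sub>2\<close>.\<close>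

section \<open>Smooth maps and their derivatives\<close>

lemma Ck_imp_continuous_on: "Ck k f S \<Longrightarrow> continuous_on S f"
proof (cases k)
  case (Suc k')
  moreover assume "Ck k f S"
  ultimately obtain f' where "\<forall>x\<in>S. (f has_derivative f' x) (at x)"
    by auto
  then show ?thesis
    by (meson continuous_at_imp_continuous_on has_derivative_continuous)
qed simp

lemma Ck_SucI:
  "(\<And>x. x \<in> S \<Longrightarrow> (f has_derivative f' x) (at x)) \<Longrightarrow> (\<And>v. Ck k (\<lambda>x. f' x v) S) \<Longrightarrow> Ck (Suc k) f S"
  by auto

lemma Ck_SucD: "Ck (Suc k) f S \<Longrightarrow> Ck k f S"
proof (induction k arbitrary: f)
  case 0
  then show ?case using Ck_imp_continuous_on by (metis Ck.simps(1))
next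
  case (Suc k)
  then show ?case by auto
qed

lemma Ck_cong:
  assumes "open S" "\<And>x. x \<in> S \<Longrightarrow> f x = g x" "Ck k f S"
  shows "Ck k g S"
  using assms(2,3)
proof (induction k arbitrary: f g)
  case 0
  then show ?case using continuous_on_cong by (metis Ck.simps(1))
next
  case (Suc k)
  then obtain f' where f': "\<forall>x\<in>S. (f has_derivative f' x) (at x)" "\<forall>v. Ck k (\<lambda>x. f' x v) S"
    by auto
  show ?case
  proof (rule Ck_SucI)
    show "(g has_derivative f' x) (at x)" if "x \<in> S" for x
      using f'(1) Suc.prems(1) assms(1) that by (metis has_derivative_transform_within_open)
  qed (use f'(2) in blast)
qed

lemma Ck_add: "Ck k f S \<Longrightarrow> Ck k g S \<Longrightarrow> Ck k (\<lambda>x. f x + g x) S"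
proof (induction k arbitrary: f g)
  case 0
  then show ?case by (simp add: continuous_on_add)
next
  case (Suc k)
  then obtain f' g' where
    "\<forall>x\<in>S. (f has_derivative f' x) (at x)" "\<forall>v. Ck k (\<lambda>x. f' x v) S"
    "\<forall>x\<in>S. (g has_derivative g' x) (at x)" "\<forall>v. Ck k (\<lambda>x. g' x v) S"
    by auto
  with Suc.IH show ?case
    by (intro Ck_SucI[where f' = "\<lambda>x v. f' x v + g' x v"] has_derivative_add) auto
qed

lemma Ck_bounded_linear:
  assumes "bounded_linear L"
  shows "Ck k f S \<Longrightarrow> Ck k (\<lambda>x. L (f x)) S"
proof (induction k arbitrary: f)
  case 0
  then show ?case by (simp add: bounded_linear.continuous_on[OF assms])
next
  case (Suc k)
  then obtain f' where "\<forall>x\<in>S. (f has_derivative f' x) (at x)" "\<forall>v. Ck k (\<lambda>x. f' x v) S"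
    by auto
  with Suc.IH show ?case
    by (intro Ck_SucI[where f' = "\<lambda>x v. L (f' x v)"] bounded_linear.has_derivative[OF assms]) auto
qed

lemma Ck_bounded_bilinear:
  assumes "bounded_bilinear b"
  shows "Ck k f S \<Longrightarrow> Ck k g S \<Longrightarrow> Ck k (\<lambda>x. b (f x) (g x)) S"
proof (induction k arbitrary: f g)
  case 0
  then show ?case by (simp add: bounded_bilinear.continuous_on[OF assms])
next
  case (Suc k)
  then obtain f' g' where
    "\<forall>x\<in>S. (f has_derivative f' x) (at x)" "\<forall>v. Ck k (\<lambda>x. f' x v) S"
    "\<forall>x\<in>S. (g has_derivative g' x) (at x)" "\<forall>v. Ck k (\<lambda>x. g' x v) S"
    by auto
  moreover have "Ck k f S" "Ck k g S"
    using Suc.prems Ck_SucD by blast+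
  ultimately show ?case using Suc.IH
    by (intro Ck_SucI[where f' = "\<lambda>x v. b (f x) (g' x v) + b (f' x v) (g x)"] Ck_add
        bounded_bilinear.FDERIV[OF assms]) auto
qed

lemma Ck_inverse:
  fixes f :: "'a::real_normed_vector \<Rightarrow> real"
  shows "Ck k f S \<Longrightarrow> (\<And>x. x \<in> S \<Longrightarrow> f x \<noteq> 0) \<Longrightarrow> Ck k (\<lambda>x. inverse (f x)) S"
proof (induction k arbitrary: f)
  case 0
  then show ?case by (simp add: continuous_on_inverse)
next
  case (Suc k)
  then obtain f' where f': "\<forall>x\<in>S. (f has_derivative f' x) (at x)" "\<forall>v. Ck k (\<lambda>x. f' x v) S"
    by auto
  have inv: "Ck k (\<lambda>x. inverse (f x)) S"
    using Suc Ck_SucD by blast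
  show ?case
  proof (rule Ck_SucI)
    show "((\<lambda>x. inverse (f x)) has_derivative (\<lambda>v. - (inverse (f x) * f' x v * inverse (f x)))) (at x)"
      if "x \<in> S" for x
      using f'(1) Suc.prems(2) that by (auto intro: has_derivative_inverse)
    show "Ck k (\<lambda>x. - (inverse (f x) * f' x v * inverse (f x))) S" for v
      using inv f'(2)
      by (intro Ck_bounded_linear[OF bounded_linear_minus[OF bounded_linear_ident]]
          Ck_bounded_bilinear[OF bounded_bilinear_mult]) auto
  qed
qed

lemma smooth_on_cong: "open S \<Longrightarrow> (\<And>x. x \<in> S \<Longrightarrow> f x = g x) \<Longrightarrow> smooth_on f S \<Longrightarrow> smooth_on g S"
  unfolding smooth_on_def using Ck_cong by blast

lemma smooth_on_add: "smooth_on f S \<Longrightarrow> smooth_on g S \<Longrightarrow> smooth_on (\<lambda>x. f x + g x) S"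
  unfolding smooth_on_def by (auto intro: Ck_add)

lemma smooth_on_bounded_linear: "bounded_linear L \<Longrightarrow> smooth_on f S \<Longrightarrow> smooth_on (\<lambda>x. L (f x)) S"
  unfolding smooth_on_def by (auto intro: Ck_bounded_linear)

lemma smooth_on_bounded_bilinear:
  "bounded_bilinear b \<Longrightarrow> smooth_on f S \<Longrightarrow> smooth_on g S \<Longrightarrow> smooth_on (\<lambda>x. b (f x) (g x)) S"
  unfolding smooth_on_def by (auto intro: Ck_bounded_bilinear)

lemma smooth_on_inverse:
  "smooth_on f S \<Longrightarrow> (\<And>x. x \<in> S \<Longrightarrow> f x \<noteq> 0) \<Longrightarrow> smooth_on (\<lambda>x. inverse (f x :: real)) S"
  unfolding smooth_on_def by (auto intro: Ck_inverse)

lemma smooth_on_mult: "smooth_on f S \<Longrightarrow> smooth_on g S \<Longrightarrow> smooth_on (\<lambda>x. f x * g x :: real) S"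
  by (rule smooth_on_bounded_bilinear[OF bounded_bilinear_mult])

lemma smooth_on_scaleR: "smooth_on f S \<Longrightarrow> smooth_on g S \<Longrightarrow> smooth_on (\<lambda>x. f x *\<^sub>R g x) S"
  by (rule smooth_on_bounded_bilinear[OF bounded_bilinear_scaleR])

lemma smooth_on_inner: "smooth_on f S \<Longrightarrow> smooth_on g S \<Longrightarrow> smooth_on (\<lambda>x. f x \<bullet> g x :: real) S"
  by (rule smooth_on_bounded_bilinear[OF bounded_bilinear_inner])

lemma smooth_on_cross3:
  fixes f g :: "'a::real_normed_vector \<Rightarrow> real^3"
  shows "smooth_on f S \<Longrightarrow> smooth_on g S \<Longrightarrow> smooth_on (\<lambda>x. cross3 (f x) (g x)) S"
  by (rule smooth_on_bounded_bilinear[OF bilinear_conv_bounded_bilinear[THEN iffD1, OF bilinear_cross]])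

lemma smooth_on_diff: "smooth_on f S \<Longrightarrow> smooth_on g S \<Longrightarrow> smooth_on (\<lambda>x. f x - g x) S"
  using smooth_on_add[OF _ smooth_on_bounded_linear[OF bounded_linear_minus[OF bounded_linear_ident]],
      of f S g] by simp

lemma smooth_on_divide: "smooth_on f S \<Longrightarrow> smooth_on (\<lambda>x. f x / (c::real)) S"
  by (rule smooth_on_bounded_linear[OF bounded_linear_divide])

lemma smooth_on_component: "smooth_on f S \<Longrightarrow> smooth_on (\<lambda>x. f x $ i) S"
  by (rule smooth_on_bounded_linear[OF bounded_linear_vec_nth])

abbreviation Df :: "('a::real_normed_vector \<Rightarrow> 'b::real_normed_vector) \<Rightarrow> 'a \<Rightarrow> 'a \<Rightarrow> 'b" where
  "Df f x \<equiv> frechet_derivative f (at x)"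

lemma smooth_on_has_derivative: "smooth_on f S \<Longrightarrow> x \<in> S \<Longrightarrow> (f has_derivative Df f x) (at x)"
proof -
  assume "smooth_on f S" "x \<in> S"
  then obtain f' where "(f has_derivative f' x) (at x)"
    unfolding smooth_on_def using Ck.simps(2)[of 0] by blast
  then show ?thesis using frechet_derivative_at by metis
qed

lemma linear_Df: "smooth_on f S \<Longrightarrow> x \<in> S \<Longrightarrow> linear (Df f x)"
  by (rule has_derivative_linear[OF smooth_on_has_derivative])

lemma Df_transform_within_open:
  assumes "open S" "x \<in> S" "\<And>y. y \<in> S \<Longrightarrow> g y = f y" "(g has_derivative g') (at x)"
  shows "Df f x = g'"
proof -
  have "(f has_derivative g') (at x)"
    by (rule has_derivative_transform_within_open[OF assms(4,1,2)]) (use assms(3) in auto)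
  then show ?thesis by (rule frechet_derivative_at[symmetric])
qed

lemma smooth_on_Df:
  assumes "open S" "smooth_on f S"
  shows "smooth_on (\<lambda>x. Df f x v) S"
  unfolding smooth_on_def
proof
  fix k
  have "Ck (Suc k) f S"
    using assms(2) unfolding smooth_on_def by blast
  then obtain f' where f': "\<forall>x\<in>S. (f has_derivative f' x) (at x)" "\<forall>v. Ck k (\<lambda>x. f' x v) S"
    by auto
  have "f' x v = Df f x v" if "x \<in> S" for x
    using f'(1) that frechet_derivative_at by fastforce
  then show "Ck k (\<lambda>x. Df f x v) S"
    using Ck_cong[OF assms(1), of "\<lambda>x. f' x v" "\<lambda>x. Df f x v" k] f'(2) by simp
qed

lemma linear_vec3_expansion:
  fixes L :: "real^3 \<Rightarrow> 'b::real_vector"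
  assumes "linear L"
  shows "L v = (v$1) *\<^sub>R L (axis 1 1) + (v$2) *\<^sub>R L (axis 2 1) + (v$3) *\<^sub>R L (axis 3 1)"
proof -
  have "L v = L (\<Sum>i\<in>UNIV. (v$i) *\<^sub>R axis i 1)"
    using basis_expansion[of v] by (simp add: scalar_mult_eq_scaleR)
  also have "\<dots> = (\<Sum>i\<in>UNIV. (v$i) *\<^sub>R L (axis i 1))"
    by (simp add: linear_sum[OF assms] linear_scale[OF assms])
  finally show ?thesis by (simp add: sum_3)
qed

lemma smooth_on_Df_apply:
  fixes f :: "real^3 \<Rightarrow> 'b::real_normed_vector"
  assumes "open S" "smooth_on f S" "smooth_on V S"
  shows "smooth_on (\<lambda>x. Df f x (V x)) S"
proof (rule smooth_on_cong[OF assms(1)])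
  show "smooth_on (\<lambda>x. (V x$1) *\<^sub>R Df f x (axis 1 1) + (V x$2) *\<^sub>R Df f x (axis 2 1)
      + (V x$3) *\<^sub>R Df f x (axis 3 1)) S"
    using smooth_on_component[OF assms(3)] smooth_on_Df[OF assms(1,2)]
    by (intro smooth_on_add smooth_on_scaleR)
  show "(V x$1) *\<^sub>R Df f x (axis 1 1) + (V x$2) *\<^sub>R Df f x (axis 2 1) + (V x$3) *\<^sub>R Df f x (axis 3 1)
      = Df f x (V x)" if "x \<in> S" for x
    using linear_vec3_expansion[OF linear_Df[OF assms(2) that], of "V x"] by simp
qed

lemma inner_Df_eq_zero:
  assumes "open S" "p \<in> S" "smooth_on A S" "smooth_on B S" "\<And>x. x \<in> S \<Longrightarrow> A x \<bullet> B x = 0"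
  shows "A p \<bullet> Df B p h + Df A p h \<bullet> B p = 0"
proof -
  have d: "((\<lambda>x. A x \<bullet> B x) has_derivative (\<lambda>h. A p \<bullet> Df B p h + Df A p h \<bullet> B p)) (at p)"
    by (rule bounded_bilinear.FDERIV[OF bounded_bilinear_inner
          smooth_on_has_derivative[OF assms(3,2)] smooth_on_has_derivative[OF assms(4,2)]])
  have d0: "((\<lambda>x. A x \<bullet> B x) has_derivative (\<lambda>h. 0)) (at p)"
    by (rule has_derivative_transform_within_open[OF has_derivative_const assms(1,2)])
      (simp add: assms(5))
  show ?thesis
    using has_derivative_unique[OF d d0] by meson
qed

lemma dird_has_derivative:
  assumes "(f has_derivative f') (at x)"
  shows "dird f x c = f' c"
proof -
  have "((\<lambda>t::real. x + t *\<^sub>R c) has_derivative (\<lambda>t. t *\<^sub>R c)) (at 0)"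
    by (auto intro!: derivative_eq_intros)
  from diff_chain_at[OF this, of f f'] assms
  have "((\<lambda>t. f (x + t *\<^sub>R c)) has_derivative (\<lambda>t. f' (t *\<^sub>R c))) (at 0)"
    by (simp add: o_def)
  moreover have "f' (t *\<^sub>R c) = t *\<^sub>R f' c" for t
    using has_derivative_linear[OF assms] by (simp add: linear_scale)
  ultimately have "((\<lambda>t. f (x + t *\<^sub>R c)) has_vector_derivative f' c) (at 0)"
    unfolding has_vector_derivative_def by simp
  then show ?thesis unfolding dird_def by (rule vector_derivative_at)
qed

lemma dird_eq_Df: "smooth_on f S \<Longrightarrow> x \<in> S \<Longrightarrow> dird f x c = Df f x c"
  by (rule dird_has_derivative[OF smooth_on_has_derivative])

lemma dird_transform_within_open:
  assumes "open S" "x \<in> S" "\<And>y. y \<in> S \<Longrightarrow> g y = f y" "(g has_derivative g') (at x)"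
  shows "dird f x c = g' c"
  by (rule dird_has_derivative, rule has_derivative_transform_within_open[OF assms(4,1,2)])
    (use assms(3) in auto)

lemma inner_cross3_cyclic:
  fixes a b c :: "real^3"
  shows "b \<bullet> cross3 c a = a \<bullet> cross3 b c" "c \<bullet> cross3 a b = a \<bullet> cross3 b c"
  by (simp_all add: cross3_simps)

lemma matrix_inv_eq:
  fixes A B :: "real^'n^'n"
  assumes "A ** B = mat 1"
  shows "matrix_inv A = B"
proof -
  have BA: "B ** A = mat 1"
    using assms matrix_left_right_inverse by blast
  then have "invertible A"
    unfolding invertible_def using assms by blast
  then have "A ** matrix_inv A = mat 1 \<and> matrix_inv A ** A = mat 1"
    unfolding invertible_def matrix_inv_def by (rule someI_ex)
  then have "B ** (A ** matrix_inv A) = B" by simp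
  then show ?thesis by (simp add: matrix_mul_assoc BA)
qed

lemma matrix_add_rdistrib: "(A + B) ** C = A ** C + B ** (C :: 'a::semiring_1^'n^'m)"
  by (simp add: matrix_matrix_mult_def vec_eq_iff sum.distrib algebra_simps)

definition outer :: "real^'n \<Rightarrow> real^'m \<Rightarrow> real^'m^'n" where
  "outer u v = (\<chi> i j. u$i * v$j)"

lemma matrix_vector_mult_outer: "outer u v *v w = (v \<bullet> w) *\<^sub>R u"
  unfolding outer_def
  by (simp add: vec_eq_iff matrix_vector_mult_def inner_vec_def sum_distrib_left
      mult.commute mult.left_commute)

lemma matrix_mult_outer: "outer p q ** outer r t = (q \<bullet> r) *\<^sub>R outer p t"
  unfolding outer_def
  by (simp add: vec_eq_iff matrix_matrix_mult_def inner_vec_def sum_distrib_left sum_distrib_right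
      mult.commute mult.left_commute)

lemma bounded_bilinear_outer: "bounded_bilinear outer"
proof -
  have "bilinear outer"
    unfolding bilinear_def linear_iff outer_def by (simp add: vec_eq_iff algebra_simps)
  then show ?thesis
    using bilinear_conv_bounded_bilinear by blast
qed

lemma independent_pair_coeffs_zero:
  fixes u v :: "'a::real_vector"
  assumes "independent {u, v}" "u \<noteq> v" "a *\<^sub>R u + b *\<^sub>R v = 0"
  shows "a = 0 \<and> b = 0"
proof (rule ccontr)
  assume nonzero: "\<not> (a = 0 \<and> b = 0)"
  have "dependent {u, v}"
    unfolding dependent_finite[OF finite.insertI[OF finite.insertI[OF finite.emptyI]]]
  proof (intro exI conjI)
    show "\<exists>w\<in>{u, v}. (if w = u then a else b) \<noteq> 0"
      using nonzero assms(2) by auto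
    show "(\<Sum>w\<in>{u, v}. (if w = u then a else b) *\<^sub>R w) = 0"
      using assms(2,3) by simp
  qed
  then show False
    using assms(1) by contradiction
qed

section \<open>The Koszul formula\<close>

definition koszul :: "(real^3 \<Rightarrow> real^3^3) \<Rightarrow> real^3 \<Rightarrow> real^3 \<Rightarrow> real^3" where
  "koszul M a b = (\<chi> k. (a \<bullet> (M b *v axis k 1) + b \<bullet> (M a *v axis k 1) - a \<bullet> (M (axis k 1) *v b)) / 2)"

lemma christoffel_eq_koszul: "christoffel G x a b = matrix_inv (G x) *v koszul (dird G x) a b"
  unfolding christoffel_def koszul_def ..

lemma inner_koszul:
  assumes "linear M"
  shows "w \<bullet> koszul M a b = (a \<bullet> (M b *v w) + b \<bullet> (M a *v w) - a \<bullet> (M w *v b)) / 2"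
proof -
  have "linear (\<lambda>w. a \<bullet> (B *v w))" for a and B :: "real^3^3"
    by (rule linearI) (simp_all add: matrix_vector_right_distrib matrix_vector_mult_scaleR inner_add_right)
  moreover have "linear (\<lambda>w. a \<bullet> (M w *v b))"
    by (rule linearI) (simp_all add: linear_add[OF assms] linear_scale[OF assms]
        matrix_vector_mult_add_rdistrib scaleR_matrix_vector_assoc[symmetric] inner_add_right)
  ultimately have "a \<bullet> (M b *v w) + b \<bullet> (M a *v w) - a \<bullet> (M w *v b)
      = (\<Sum>k\<in>UNIV. w$k * (a \<bullet> (M b *v axis k 1) + b \<bullet> (M a *v axis k 1) - a \<bullet> (M (axis k 1) *v b)))"
    using linear_vec3_expansion[of "\<lambda>w. a \<bullet> (M b *v w)" w] linear_vec3_expansion[of "\<lambda>w. b \<bullet> (M a *v w)" w]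
      linear_vec3_expansion[of "\<lambda>w. a \<bullet> (M w *v b)" w]
    by (simp add: sum_3 algebra_simps)
  then show ?thesis
    unfolding koszul_def inner_vec_def by (simp add: sum_divide_distrib)
qed

text \<open>A vector field \<open>T\<close> stands for the 1-form \<open>\<theta> = \<langle>T, \<cdot>\<rangle>\<close>: \<open>dform T x\<close> is \<open>d\<theta>\<close> at \<open>x\<close>,
  and \<open>dsquare T x v\<close> is the derivative of \<open>\<theta> \<otimes> \<theta>\<close> in direction \<open>v\<close>.\<close>

definition dform :: "(real^3 \<Rightarrow> real^3) \<Rightarrow> real^3 \<Rightarrow> real^3 \<Rightarrow> real^3 \<Rightarrow> real" where
  "dform T x u v = Df T x u \<bullet> v - Df T x v \<bullet> u"

definition dsym :: "(real^3 \<Rightarrow> real^3) \<Rightarrow> real^3 \<Rightarrow> real^3 \<Rightarrow> real^3 \<Rightarrow> real" where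
  "dsym T x a b = (Df T x b \<bullet> a + Df T x a \<bullet> b) / 2"

definition dmix :: "(real^3 \<Rightarrow> real^3) \<Rightarrow> real^3 \<Rightarrow> real^3 \<Rightarrow> real^3 \<Rightarrow> real^3 \<Rightarrow> real" where
  "dmix T x a b w = ((a \<bullet> T x) * dform T x b w + (b \<bullet> T x) * dform T x a w) / 2"

definition dsquare :: "(real^3 \<Rightarrow> real^3) \<Rightarrow> real^3 \<Rightarrow> real^3 \<Rightarrow> real^3^3" where
  "dsquare T x v = outer (T x) (Df T x v) + outer (Df T x v) (T x)"

lemma koszul_dsquare:
  "(a \<bullet> (dsquare T x b *v w) + b \<bullet> (dsquare T x a *v w) - a \<bullet> (dsquare T x w *v b)) / 2
     = (T x \<bullet> w) * dsym T x a b + dmix T x a b w"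
  unfolding dsquare_def dsym_def dmix_def dform_def
  by (simp add: matrix_vector_mult_add_rdistrib matrix_vector_mult_outer algebra_simps inner_commute
      add_divide_distrib diff_divide_distrib)

lemma dform_self: "dform T x u u = 0"
  unfolding dform_def by simp

lemma dform_swap: "dform T x u v = - dform T x v u"
  unfolding dform_def by simp

lemma dform_linear:
  assumes "linear (Df T x)"
  shows "dform T x (u + u') v = dform T x u v + dform T x u' v" "dform T x (c *\<^sub>R u) v = c * dform T x u v"
    "dform T x u (v + v') = dform T x u v + dform T x u v'" "dform T x u (c *\<^sub>R v) = c * dform T x u v"
  unfolding dform_def using assms
  by (simp_all add: linear_add linear_scale inner_add_left inner_add_right algebra_simps)

lemma dsym_linear:
  assumes "linear (Df T x)"
  shows "dsym T x u (v + v') = dsym T x u v + dsym T x u v'" "dsym T x u (c *\<^sub>R v) = c * dsym T x u v"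
  unfolding dsym_def using assms
  by (simp_all add: linear_add linear_scale inner_add_left inner_add_right algebra_simps add_divide_distrib)

lemma dmix_linear:
  assumes "linear (Df T x)"
  shows "dmix T x u (v + v') w = dmix T x u v w + dmix T x u v' w" "dmix T x u (c *\<^sub>R v) w = c * dmix T x u v w"
    "dmix T x u v (w + w') = dmix T x u v w + dmix T x u v w'" "dmix T x u v (c *\<^sub>R w) = c * dmix T x u v w"
  unfolding dmix_def using dform_linear[OF assms]
  by (simp_all add: inner_add_left algebra_simps add_divide_distrib)

lemma smooth_on_dform:
  assumes "open S" "smooth_on T S" "smooth_on A S" "smooth_on B S"
  shows "smooth_on (\<lambda>x. dform T x (A x) (B x)) S"
  unfolding dform_def
  by (intro smooth_on_diff smooth_on_inner smooth_on_Df_apply assms)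

lemma smooth_on_dsym:
  assumes "open S" "smooth_on T S" "smooth_on A S" "smooth_on B S"
  shows "smooth_on (\<lambda>x. dsym T x (A x) (B x)) S"
  unfolding dsym_def
  by (intro smooth_on_divide smooth_on_add smooth_on_inner smooth_on_Df_apply assms)

lemma smooth_on_dmix:
  assumes "open S" "smooth_on T S" "smooth_on A S" "smooth_on B S" "smooth_on C S"
  shows "smooth_on (\<lambda>x. dmix T x (A x) (B x) (C x)) S"
  unfolding dmix_def
  by (intro smooth_on_divide smooth_on_add smooth_on_mult smooth_on_inner smooth_on_dform assms)

section \<open>Expansions in powers of \<open>\<epsilon>\<^sup>2\<close>\<close>

definition eps_expansion :: "(real \<Rightarrow> 'a::real_vector) \<Rightarrow> 'a \<Rightarrow> bool" where
  "eps_expansion F V \<longleftrightarrow>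
     (\<exists>c0 c1 c2. \<forall>\<epsilon>. \<epsilon> \<noteq> 0 \<longrightarrow> F \<epsilon> = (1/\<epsilon>\<^sup>2) *\<^sub>R V + c0 + \<epsilon>\<^sup>2 *\<^sub>R c1 + (\<epsilon>\<^sup>2)\<^sup>2 *\<^sub>R c2)"

lemma eps_expansionI:
  "(\<And>\<epsilon>. \<epsilon> \<noteq> 0 \<Longrightarrow> F \<epsilon> = (1/\<epsilon>\<^sup>2) *\<^sub>R V + a + \<epsilon>\<^sup>2 *\<^sub>R b + (\<epsilon>\<^sup>2)\<^sup>2 *\<^sub>R c) \<Longrightarrow> eps_expansion F V"
  unfolding eps_expansion_def by blast

lemma eps_expansion_diff:
  assumes "eps_expansion F V" "eps_expansion G W"
  shows "eps_expansion (\<lambda>\<epsilon>. F \<epsilon> - G \<epsilon>) (V - W)"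
proof -
  obtain c0 c1 c2 d0 d1 d2 where
    "\<forall>\<epsilon>. \<epsilon> \<noteq> 0 \<longrightarrow> F \<epsilon> = (1/\<epsilon>\<^sup>2) *\<^sub>R V + c0 + \<epsilon>\<^sup>2 *\<^sub>R c1 + (\<epsilon>\<^sup>2)\<^sup>2 *\<^sub>R c2"
    "\<forall>\<epsilon>. \<epsilon> \<noteq> 0 \<longrightarrow> G \<epsilon> = (1/\<epsilon>\<^sup>2) *\<^sub>R W + d0 + \<epsilon>\<^sup>2 *\<^sub>R d1 + (\<epsilon>\<^sup>2)\<^sup>2 *\<^sub>R d2"
    using assms unfolding eps_expansion_def by blast
  then show ?thesis
    by (intro eps_expansionI[where a = "c0 - d0" and b = "c1 - d1" and c = "c2 - d2"])
      (simp add: algebra_simps)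
qed

lemma eps_expansion_linear:
  assumes "linear L" "eps_expansion F V"
  shows "eps_expansion (\<lambda>\<epsilon>. L (F \<epsilon>)) (L V)"
proof -
  obtain c0 c1 c2 where
    "\<forall>\<epsilon>. \<epsilon> \<noteq> 0 \<longrightarrow> F \<epsilon> = (1/\<epsilon>\<^sup>2) *\<^sub>R V + c0 + \<epsilon>\<^sup>2 *\<^sub>R c1 + (\<epsilon>\<^sup>2)\<^sup>2 *\<^sub>R c2"
    using assms(2) unfolding eps_expansion_def by blast
  then show ?thesis
    by (intro eps_expansionI[where a = "L c0" and b = "L c1" and c = "L c2"])
      (simp add: linear_add[OF assms(1)] linear_scale[OF assms(1)])
qed

lemma eps_expansion_bigo:
  fixes F :: "real \<Rightarrow> real"
  assumes "eps_expansion F V"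
  shows "(\<lambda>\<epsilon>. F \<epsilon> - V / \<epsilon>\<^sup>2) \<in> O[at_right 0](\<lambda>_. 1)"
proof -
  obtain c0 c1 c2 where F: "\<forall>\<epsilon>. \<epsilon> \<noteq> 0 \<longrightarrow> F \<epsilon> = (1/\<epsilon>\<^sup>2) * V + c0 + \<epsilon>\<^sup>2 * c1 + (\<epsilon>\<^sup>2)\<^sup>2 * c2"
    using assms unfolding eps_expansion_def by auto
  have "((\<lambda>\<epsilon>::real. c0 + \<epsilon>\<^sup>2 * c1 + (\<epsilon>\<^sup>2)\<^sup>2 * c2) \<longlongrightarrow> c0) (at_right 0)"
    by (auto intro!: tendsto_eq_intros)
  moreover have "eventually (\<lambda>\<epsilon>. c0 + \<epsilon>\<^sup>2 * c1 + (\<epsilon>\<^sup>2)\<^sup>2 * c2 = F \<epsilon> - V / \<epsilon>\<^sup>2) (at_right 0)"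
    using eventually_at_right_less[of 0] by eventually_elim (simp add: F)
  ultimately have "((\<lambda>\<epsilon>. F \<epsilon> - V / \<epsilon>\<^sup>2) \<longlongrightarrow> c0) (at_right 0)"
    by (rule Lim_transform_eventually)
  then show ?thesis
    by (intro bigoI_tendsto[where c = c0]) simp_all
qed

section \<open>The metrics \<open>g\<^sup>\<epsilon>\<close> and their Christoffel symbols\<close>

locale frame =
  fixes U :: "(real^3) set" and X0 X1 X2 :: "real^3 \<Rightarrow> real^3"
  assumes open_U: "open U"
    and smooth_X0: "smooth_on X0 U" and smooth_X1: "smooth_on X1 U" and smooth_X2: "smooth_on X2 U"
    and invertible_frame_mat: "\<And>x. x \<in> U \<Longrightarrow> invertible (frame_mat X0 X1 X2 x)"
begin

definition vol :: "real^3 \<Rightarrow> real" where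
  "vol x = X0 x \<bullet> cross3 (X1 x) (X2 x)"

text \<open>The dual coframe, obtained from the frame by Cramer's rule.\<close>

definition \<theta>0 :: "real^3 \<Rightarrow> real^3" where "\<theta>0 x = inverse (vol x) *\<^sub>R cross3 (X1 x) (X2 x)"
definition \<theta>1 :: "real^3 \<Rightarrow> real^3" where "\<theta>1 x = inverse (vol x) *\<^sub>R cross3 (X2 x) (X0 x)"
definition \<theta>2 :: "real^3 \<Rightarrow> real^3" where "\<theta>2 x = inverse (vol x) *\<^sub>R cross3 (X0 x) (X1 x)"

lemma det_frame_mat: "det (frame_mat X0 X1 X2 x) = vol x"
  unfolding frame_mat_def vol_def by (simp add: det_transpose dot_cross_det)

lemma vol_nonzero: "x \<in> U \<Longrightarrow> vol x \<noteq> 0"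
  using invertible_frame_mat invertible_det_nz det_frame_mat by metis

lemma coframe_frame:
  assumes "x \<in> U"
  shows "\<theta>0 x \<bullet> X0 x = 1" "\<theta>0 x \<bullet> X1 x = 0" "\<theta>0 x \<bullet> X2 x = 0"
    "\<theta>1 x \<bullet> X0 x = 0" "\<theta>1 x \<bullet> X1 x = 1" "\<theta>1 x \<bullet> X2 x = 0"
    "\<theta>2 x \<bullet> X0 x = 0" "\<theta>2 x \<bullet> X1 x = 0" "\<theta>2 x \<bullet> X2 x = 1"
  using vol_nonzero[OF assms] unfolding \<theta>0_def \<theta>1_def \<theta>2_def vol_def
  by (simp_all add: inner_commute[of "cross3 _ _"] dot_cross_self inner_cross3_cyclic)

definition coframe_mat :: "real^3 \<Rightarrow> real^3^3" where
  "coframe_mat x = vector [\<theta>0 x, \<theta>1 x, \<theta>2 x]"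

lemma coframe_mat_frame_mat:
  assumes "x \<in> U"
  shows "coframe_mat x ** frame_mat X0 X1 X2 x = mat 1"
proof -
  have "(coframe_mat x ** frame_mat X0 X1 X2 x) $ i $ j = (coframe_mat x $ i) \<bullet> (vector [X0 x, X1 x, X2 x] $ j)"
    for i j
    unfolding frame_mat_def matrix_matrix_mult_def transpose_def inner_vec_def
    by (simp add: mult.commute)
  then show ?thesis
    unfolding coframe_mat_def using coframe_frame[OF assms]
    by (simp add: vec_eq_iff forall_3 mat_def)
qed

lemma frame_mat_coframe_mat: "x \<in> U \<Longrightarrow> frame_mat X0 X1 X2 x ** coframe_mat x = mat 1"
  using matrix_left_right_inverse coframe_mat_frame_mat by blast

lemma matrix_inv_frame_mat: "x \<in> U \<Longrightarrow> matrix_inv (frame_mat X0 X1 X2 x) = coframe_mat x"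
  by (rule matrix_inv_eq[OF frame_mat_coframe_mat])

lemma frame_expansion:
  assumes "x \<in> U"
  shows "w = (\<theta>0 x \<bullet> w) *\<^sub>R X0 x + (\<theta>1 x \<bullet> w) *\<^sub>R X1 x + (\<theta>2 x \<bullet> w) *\<^sub>R X2 x"
proof -
  have "w = (frame_mat X0 X1 X2 x ** coframe_mat x) *v w"
    by (simp add: frame_mat_coframe_mat[OF assms])
  also have "\<dots> = frame_mat X0 X1 X2 x *v (coframe_mat x *v w)"
    by (simp add: matrix_vector_mul_assoc)
  also have "\<dots> = (\<theta>0 x \<bullet> w) *\<^sub>R X0 x + (\<theta>1 x \<bullet> w) *\<^sub>R X1 x + (\<theta>2 x \<bullet> w) *\<^sub>R X2 x"
    unfolding frame_mat_def coframe_mat_def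
    by (simp add: vec_eq_iff forall_3 matrix_vector_mult_def transpose_def inner_vec_def sum_3 mult.commute)
  finally show ?thesis .
qed

lemma outer_frame_coframe_sum:
  assumes "x \<in> U"
  shows "outer (\<theta>0 x) (X0 x) + outer (\<theta>1 x) (X1 x) + outer (\<theta>2 x) (X2 x) = mat 1"
proof -
  have "transpose (frame_mat X0 X1 X2 x ** coframe_mat x) = mat 1"
    by (simp add: frame_mat_coframe_mat[OF assms] transpose_mat)
  then show ?thesis
    unfolding frame_mat_def coframe_mat_def outer_def
    by (simp add: vec_eq_iff forall_3 matrix_matrix_mult_def transpose_def sum_3 algebra_simps)
qed

lemma c0_12_eq: "x \<in> U \<Longrightarrow> c0_12 X0 X1 X2 x = \<theta>0 x \<bullet> lie X2 X1 x"
  unfolding c0_12_def matrix_inv_frame_mat coframe_mat_def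
  by (simp add: matrix_vector_mult_def inner_vec_def mult.commute)

lemma smooth_coframe: "smooth_on \<theta>0 U" "smooth_on \<theta>1 U" "smooth_on \<theta>2 U"
proof -
  have "smooth_on vol U"
    unfolding vol_def by (intro smooth_on_inner smooth_on_cross3 smooth_X0 smooth_X1 smooth_X2)
  then show "smooth_on \<theta>0 U" "smooth_on \<theta>1 U" "smooth_on \<theta>2 U"
    unfolding \<theta>0_def \<theta>1_def \<theta>2_def
    by (auto intro!: smooth_on_scaleR smooth_on_cross3 smooth_X0 smooth_X1 smooth_X2 smooth_on_inverse
        vol_nonzero)
qed

definition metric_mat :: "real \<Rightarrow> real^3 \<Rightarrow> real^3^3" where
  "metric_mat s x = s *\<^sub>R outer (\<theta>0 x) (\<theta>0 x) + outer (\<theta>1 x) (\<theta>1 x) + outer (\<theta>2 x) (\<theta>2 x)"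

definition metric_mat_inv :: "real \<Rightarrow> real^3 \<Rightarrow> real^3^3" where
  "metric_mat_inv s x = inverse s *\<^sub>R outer (X0 x) (X0 x) + outer (X1 x) (X1 x) + outer (X2 x) (X2 x)"

definition metric_mat_deriv :: "real \<Rightarrow> real^3 \<Rightarrow> real^3 \<Rightarrow> real^3^3" where
  "metric_mat_deriv s x v = s *\<^sub>R dsquare \<theta>0 x v + dsquare \<theta>1 x v + dsquare \<theta>2 x v"

lemma g_eps_eq_metric_mat: "x \<in> U \<Longrightarrow> g_eps \<epsilon> X0 X1 X2 x = metric_mat (1/\<epsilon>\<^sup>2) x"
  unfolding g_eps_def matrix_inv_frame_mat metric_mat_def coframe_mat_def outer_def
  by (simp add: vec_eq_iff forall_3 matrix_matrix_mult_def transpose_def sum_3 algebra_simps)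

lemma matrix_inv_g_eps:
  assumes "x \<in> U" "\<epsilon> \<noteq> 0"
  shows "matrix_inv (g_eps \<epsilon> X0 X1 X2 x) = metric_mat_inv (1/\<epsilon>\<^sup>2) x"
proof -
  have "metric_mat (1/\<epsilon>\<^sup>2) x ** metric_mat_inv (1/\<epsilon>\<^sup>2) x
      = outer (\<theta>0 x) (X0 x) + outer (\<theta>1 x) (X1 x) + outer (\<theta>2 x) (X2 x)"
    unfolding metric_mat_def metric_mat_inv_def
    using assms(2)
    by (simp add: matrix_add_ldistrib matrix_add_rdistrib scalar_matrix_assoc[symmetric]
        matrix_scalar_ac matrix_mult_outer coframe_frame[OF assms(1)])
  then show ?thesis
    unfolding g_eps_eq_metric_mat[OF assms(1)] outer_frame_coframe_sum[OF assms(1)]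
    by (rule matrix_inv_eq)
qed

lemma metric_mat_inv_mult:
  "metric_mat_inv s x *v z = inverse s *\<^sub>R ((X0 x \<bullet> z) *\<^sub>R X0 x) + (X1 x \<bullet> z) *\<^sub>R X1 x + (X2 x \<bullet> z) *\<^sub>R X2 x"
  unfolding metric_mat_inv_def
  by (simp add: matrix_vector_mult_add_rdistrib scaleR_matrix_vector_assoc[symmetric] matrix_vector_mult_outer)

lemma ip_g_eps:
  assumes "x \<in> U"
  shows "ip (g_eps \<epsilon> X0 X1 X2) x u w
    = (1/\<epsilon>\<^sup>2) * ((u \<bullet> \<theta>0 x) * (\<theta>0 x \<bullet> w)) + (u \<bullet> \<theta>1 x) * (\<theta>1 x \<bullet> w) + (u \<bullet> \<theta>2 x) * (\<theta>2 x \<bullet> w)"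
  unfolding ip_def g_eps_eq_metric_mat[OF assms] metric_mat_def
  by (simp add: matrix_vector_mult_add_rdistrib scaleR_matrix_vector_assoc[symmetric] inner_add_right
      matrix_vector_mult_outer)

lemma has_derivative_metric_mat:
  assumes "x \<in> U"
  shows "(metric_mat s has_derivative metric_mat_deriv s x) (at x)"
proof -
  have square: "((\<lambda>y. outer (T y) (T y)) has_derivative dsquare T x) (at x)" if "smooth_on T U" for T
    unfolding dsquare_def
    using bounded_bilinear.FDERIV[OF bounded_bilinear_outer
        smooth_on_has_derivative[OF that assms] smooth_on_has_derivative[OF that assms]]
    by (simp add: add.commute)
  then show ?thesis
    unfolding metric_mat_def[abs_def] metric_mat_deriv_def[abs_def]
    by (intro has_derivative_add has_derivative_scaleR_right square smooth_coframe)
qed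

lemma dird_g_eps: "x \<in> U \<Longrightarrow> dird (g_eps \<epsilon> X0 X1 X2) x = metric_mat_deriv (1/\<epsilon>\<^sup>2) x"
  by (rule ext, rule dird_transform_within_open[OF open_U _ _ has_derivative_metric_mat])
    (simp_all add: g_eps_eq_metric_mat)

lemma inner_koszul_metric_mat_deriv:
  assumes "x \<in> U"
  shows "w \<bullet> koszul (metric_mat_deriv s x) a b
    = s * ((\<theta>0 x \<bullet> w) * dsym \<theta>0 x a b + dmix \<theta>0 x a b w)
      + ((\<theta>1 x \<bullet> w) * dsym \<theta>1 x a b + dmix \<theta>1 x a b w)
      + ((\<theta>2 x \<bullet> w) * dsym \<theta>2 x a b + dmix \<theta>2 x a b w)"
  unfolding inner_koszul[OF has_derivative_linear[OF has_derivative_metric_mat[OF assms]]]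
    koszul_dsquare[symmetric]
  unfolding metric_mat_deriv_def
  by (simp add: matrix_vector_mult_add_rdistrib scaleR_matrix_vector_assoc[symmetric] inner_add_right
      algebra_simps add_divide_distrib diff_divide_distrib)

definition christ_inv_sq :: "real^3 \<Rightarrow> real^3 \<Rightarrow> real^3 \<Rightarrow> real^3" where
  "christ_inv_sq x a b = dmix \<theta>0 x a b (X1 x) *\<^sub>R X1 x + dmix \<theta>0 x a b (X2 x) *\<^sub>R X2 x"

definition christ_const :: "real^3 \<Rightarrow> real^3 \<Rightarrow> real^3 \<Rightarrow> real^3" where
  "christ_const x a b = (dsym \<theta>0 x a b + dmix \<theta>0 x a b (X0 x)) *\<^sub>R X0 x
     + (dsym \<theta>1 x a b + dmix \<theta>1 x a b (X1 x) + dmix \<theta>2 x a b (X1 x)) *\<^sub>R X1 x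
     + (dsym \<theta>2 x a b + dmix \<theta>1 x a b (X2 x) + dmix \<theta>2 x a b (X2 x)) *\<^sub>R X2 x"

definition christ_sq :: "real^3 \<Rightarrow> real^3 \<Rightarrow> real^3 \<Rightarrow> real^3" where
  "christ_sq x a b = (dmix \<theta>1 x a b (X0 x) + dmix \<theta>2 x a b (X0 x)) *\<^sub>R X0 x"

lemma christoffel_g_eps:
  assumes "x \<in> U" "\<epsilon> \<noteq> 0"
  shows "christoffel (g_eps \<epsilon> X0 X1 X2) x a b
    = (1/\<epsilon>\<^sup>2) *\<^sub>R christ_inv_sq x a b + christ_const x a b + \<epsilon>\<^sup>2 *\<^sub>R christ_sq x a b"
proof -
  define s where "s = 1/\<epsilon>\<^sup>2"
  have s: "s \<noteq> 0" "inverse s = \<epsilon>\<^sup>2"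
    using assms(2) by (simp_all add: s_def)
  have "christoffel (g_eps \<epsilon> X0 X1 X2) x a b = metric_mat_inv s x *v koszul (metric_mat_deriv s x) a b"
    unfolding christoffel_eq_koszul dird_g_eps[OF assms(1)] matrix_inv_g_eps[OF assms] s_def ..
  also have "\<dots> = s *\<^sub>R christ_inv_sq x a b + christ_const x a b + inverse s *\<^sub>R christ_sq x a b"
    unfolding metric_mat_inv_mult inner_koszul_metric_mat_deriv[OF assms(1)]
      christ_inv_sq_def christ_const_def christ_sq_def
    using s(1) by (simp add: coframe_frame[OF assms(1)] algebra_simps mult.assoc[symmetric])
  finally show ?thesis
    unfolding s(2) unfolding s_def .
qed

lemma smooth_on_christ:
  assumes "smooth_on A U" "smooth_on B U"
  shows "smooth_on (\<lambda>x. christ_inv_sq x (A x) (B x)) U"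
    and "smooth_on (\<lambda>x. christ_const x (A x) (B x)) U"
    and "smooth_on (\<lambda>x. christ_sq x (A x) (B x)) U"
  unfolding christ_inv_sq_def christ_const_def christ_sq_def
  by (intro smooth_on_add smooth_on_scaleR smooth_on_dmix smooth_on_dsym open_U assms
      smooth_coframe smooth_X0 smooth_X1 smooth_X2)+

lemma linear_christ:
  assumes "x \<in> U"
  shows "linear (christ_inv_sq x u)" "linear (christ_const x u)" "linear (christ_sq x u)"
proof -
  have "linear (Df T x)" if "smooth_on T U" for T
    using linear_Df[OF that assms] .
  note lin = this[OF smooth_coframe(1)] this[OF smooth_coframe(2)] this[OF smooth_coframe(3)]
  show "linear (christ_inv_sq x u)" "linear (christ_const x u)" "linear (christ_sq x u)"
    unfolding christ_inv_sq_def christ_const_def christ_sq_def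
    by (rule linearI; simp add: dmix_linear[OF lin(1)] dmix_linear[OF lin(2)] dmix_linear[OF lin(3)]
        dsym_linear[OF lin(1)] dsym_linear[OF lin(2)] dsym_linear[OF lin(3)] algebra_simps)+
qed

lemma nabla_g_eps:
  assumes "x \<in> U" "\<epsilon> \<noteq> 0" "smooth_on C U"
  shows "nabla (g_eps \<epsilon> X0 X1 X2) B C x
    = (Df C x (B x) + christ_const x (B x) (C x)) + (1/\<epsilon>\<^sup>2) *\<^sub>R christ_inv_sq x (B x) (C x)
      + \<epsilon>\<^sup>2 *\<^sub>R christ_sq x (B x) (C x)"
  unfolding nabla_def dird_eq_Df[OF assms(3,1)] christoffel_g_eps[OF assms(1,2)] by simp

lemma eps_expansion_nabla:
  assumes "p \<in> U" "smooth_on C U"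
  shows "eps_expansion (\<lambda>\<epsilon>. nabla (g_eps \<epsilon> X0 X1 X2) B C p) (christ_inv_sq p (B p) (C p))"
  by (rule eps_expansionI[where b = "christ_sq p (B p) (C p)" and c = 0])
    (simp add: nabla_g_eps[OF assms(1) _ assms(2)])

text \<open>Without the hypothesis \<open>christ_inv_sq p (B p) (C p) = 0\<close> the expansion would start
  with an \<open>\<epsilon>\<^sup>-\<^sup>4\<close> term.\<close>

lemma eps_expansion_nabla_nabla:
  assumes "p \<in> U" "smooth_on A U" "smooth_on B U" "smooth_on C U"
    and "christ_inv_sq p (B p) (C p) = 0"
  shows "eps_expansion (\<lambda>\<epsilon>. nabla (g_eps \<epsilon> X0 X1 X2) A (nabla (g_eps \<epsilon> X0 X1 X2) B C) p)
    (Df (\<lambda>x. christ_inv_sq x (B x) (C x)) p (A p)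
      + christ_inv_sq p (A p) (Df C p (B p) + christ_const p (B p) (C p)))"
proof -
  define W where "W x = Df C x (B x) + christ_const x (B x) (C x)" for x
  define P where "P x = christ_inv_sq x (B x) (C x)" for x
  define Q where "Q x = christ_sq x (B x) (C x)" for x
  define u where "u = A p"
  have smooth: "smooth_on W U" "smooth_on P U" "smooth_on Q U"
    unfolding W_def P_def Q_def
    by (intro smooth_on_add smooth_on_Df_apply smooth_on_christ open_U assms)+
  have "nabla (g_eps \<epsilon> X0 X1 X2) A (nabla (g_eps \<epsilon> X0 X1 X2) B C) p
      = (1/\<epsilon>\<^sup>2) *\<^sub>R (Df P p u + christ_inv_sq p u (W p))
        + (Df W p u + christ_inv_sq p u (Q p) + christ_const p u (W p))
        + \<epsilon>\<^sup>2 *\<^sub>R (Df Q p u + christ_const p u (Q p) + christ_sq p u (W p))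
        + (\<epsilon>\<^sup>2)\<^sup>2 *\<^sub>R christ_sq p u (Q p)" if "\<epsilon> \<noteq> 0" for \<epsilon>
  proof -
    have field: "nabla (g_eps \<epsilon> X0 X1 X2) B C x = W x + (1/\<epsilon>\<^sup>2) *\<^sub>R P x + \<epsilon>\<^sup>2 *\<^sub>R Q x" if "x \<in> U" for x
      unfolding W_def P_def Q_def nabla_g_eps[OF that \<open>\<epsilon> \<noteq> 0\<close> assms(4)] ..
    have deriv: "((\<lambda>x. W x + (1/\<epsilon>\<^sup>2) *\<^sub>R P x + \<epsilon>\<^sup>2 *\<^sub>R Q x) has_derivative
        (\<lambda>v. Df W p v + (1/\<epsilon>\<^sup>2) *\<^sub>R Df P p v + \<epsilon>\<^sup>2 *\<^sub>R Df Q p v)) (at p)"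
      by (intro has_derivative_add has_derivative_scaleR_right smooth_on_has_derivative[OF _ assms(1)]
          smooth)
    have "dird (nabla (g_eps \<epsilon> X0 X1 X2) B C) p u
        = Df W p u + (1/\<epsilon>\<^sup>2) *\<^sub>R Df P p u + \<epsilon>\<^sup>2 *\<^sub>R Df Q p u"
      by (rule dird_transform_within_open[OF open_U assms(1) _ deriv]) (simp add: field)
    moreover have "nabla (g_eps \<epsilon> X0 X1 X2) B C p = W p + \<epsilon>\<^sup>2 *\<^sub>R Q p"
      using field[OF assms(1)] assms(5) by (simp add: P_def)
    moreover note lin = linear_christ[OF assms(1), THEN linear_add] linear_christ[OF assms(1), THEN linear_scale]
    ultimately show ?thesis
      unfolding nabla_def[of _ A] christoffel_g_eps[OF assms(1) that] u_def[symmetric]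
      using that by (simp add: lin algebra_simps power2_eq_square)
  qed
  then show ?thesis
    unfolding W_def P_def u_def by (rule eps_expansionI)
qed

lemma horizontal_frame_expansion:
  assumes "x \<in> U" "v \<bullet> \<theta>0 x = 0"
  shows "v = (\<theta>1 x \<bullet> v) *\<^sub>R X1 x + (\<theta>2 x \<bullet> v) *\<^sub>R X2 x"
  using frame_expansion[OF assms(1), of v] assms(2) by (simp add: inner_commute)

lemma horizontal_if_in_span:
  assumes "x \<in> U" "v \<in> span {X1 x, X2 x}"
  shows "v \<bullet> \<theta>0 x = 0"
proof -
  obtain k1 k2 where "v = k1 *\<^sub>R X1 x + k2 *\<^sub>R X2 x"
    using assms(2) unfolding span_insert[of "X1 x"] span_singleton by (auto simp: algebra_simps)
  then show ?thesis
    using coframe_frame[OF assms(1)]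
    by (simp add: inner_add_left inner_commute[of "X1 x"] inner_commute[of "X2 x"])
qed

lemma dform_frame_eq_c0_12:
  assumes "p \<in> U"
  shows "dform \<theta>0 p (X1 p) (X2 p) = c0_12 X0 X1 X2 p"
proof -
  txt \<open>Cartan's formula \<open>d\<theta>0(X1,X2) = X1(\<theta>0 X2) - X2(\<theta>0 X1) - \<theta>0[X1,X2]\<close> with
    \<open>\<theta>0 X1 = \<theta>0 X2 = 0\<close>.\<close>
  have "X2 p \<bullet> Df \<theta>0 p (X1 p) + Df X2 p (X1 p) \<bullet> \<theta>0 p = 0"
    by (rule inner_Df_eq_zero[OF open_U assms smooth_X2 smooth_coframe(1)])
      (metis coframe_frame inner_commute)
  moreover have "X1 p \<bullet> Df \<theta>0 p (X2 p) + Df X1 p (X2 p) \<bullet> \<theta>0 p = 0"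
    by (rule inner_Df_eq_zero[OF open_U assms smooth_X1 smooth_coframe(1)])
      (metis coframe_frame inner_commute)
  moreover have "c0_12 X0 X1 X2 p = \<theta>0 p \<bullet> (Df X1 p (X2 p) - Df X2 p (X1 p))"
    unfolding c0_12_eq[OF assms] lie_def dird_eq_Df[OF smooth_X1 assms] dird_eq_Df[OF smooth_X2 assms] ..
  ultimately show ?thesis
    unfolding dform_def by (simp add: inner_diff_right inner_commute)
qed

text \<open>The vector in the distribution representing \<open>d\<theta>0(V, \<cdot>)\<close>.\<close>

definition dsharp :: "real^3 \<Rightarrow> real^3 \<Rightarrow> real^3" where
  "dsharp x V = dform \<theta>0 x V (X1 x) *\<^sub>R X1 x + dform \<theta>0 x V (X2 x) *\<^sub>R X2 x"

lemma christ_inv_sq_eq_dsharp: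
  "christ_inv_sq x a b = (1/2) *\<^sub>R ((a \<bullet> \<theta>0 x) *\<^sub>R dsharp x b + (b \<bullet> \<theta>0 x) *\<^sub>R dsharp x a)"
  unfolding christ_inv_sq_def dmix_def dsharp_def by (simp add: algebra_simps add_divide_distrib)

lemma Df_christ_inv_sq:
  assumes "p \<in> U" "smooth_on B U" "smooth_on C U" "B p \<bullet> \<theta>0 p = 0" "C p \<bullet> \<theta>0 p = 0"
  shows "Df (\<lambda>x. christ_inv_sq x (B x) (C x)) p u
    = (1/2) *\<^sub>R ((Df B p u \<bullet> \<theta>0 p + B p \<bullet> Df \<theta>0 p u) *\<^sub>R dsharp p (C p)
      + (Df C p u \<bullet> \<theta>0 p + C p \<bullet> Df \<theta>0 p u) *\<^sub>R dsharp p (B p))"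
proof -
  have smooth_dsharp: "smooth_on (\<lambda>x. dsharp x (A x)) U" if "smooth_on A U" for A
    unfolding dsharp_def
    by (intro smooth_on_add smooth_on_scaleR smooth_on_dform open_U smooth_coframe smooth_X1 smooth_X2 that)
  note D = smooth_on_has_derivative[OF _ assms(1)]
  have "((\<lambda>x. (1/2) *\<^sub>R ((B x \<bullet> \<theta>0 x) *\<^sub>R dsharp x (C x) + (C x \<bullet> \<theta>0 x) *\<^sub>R dsharp x (B x)))
      has_derivative (\<lambda>u. (1/2) *\<^sub>R (
        (B p \<bullet> \<theta>0 p) *\<^sub>R Df (\<lambda>x. dsharp x (C x)) p u + (B p \<bullet> Df \<theta>0 p u + Df B p u \<bullet> \<theta>0 p) *\<^sub>R dsharp p (C p)
      + ((C p \<bullet> \<theta>0 p) *\<^sub>R Df (\<lambda>x. dsharp x (B x)) p u + (C p \<bullet> Df \<theta>0 p u + Df C p u \<bullet> \<theta>0 p) *\<^sub>R dsharp p (B p)))))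
      (at p)"
    by (intro has_derivative_scaleR_right has_derivative_add
        bounded_bilinear.FDERIV[OF bounded_bilinear_scaleR]
        bounded_bilinear.FDERIV[OF bounded_bilinear_inner] D smooth_dsharp smooth_coframe assms(2,3))
  from Df_transform_within_open[OF open_U assms(1) _ this] show ?thesis
    using assms(4,5) by (simp add: christ_inv_sq_eq_dsharp algebra_simps)
qed

lemma inner_christ_const_\<theta>0:
  "x \<in> U \<Longrightarrow> christ_const x u v \<bullet> \<theta>0 x = dsym \<theta>0 x u v + dmix \<theta>0 x u v (X0 x)"
  unfolding christ_const_def
  by (simp add: inner_add_left inner_commute[of "X0 x"] inner_commute[of "X1 x"] inner_commute[of "X2 x"]
      coframe_frame)

end

section \<open>Curvature at a characteristic point\<close>

locale horizontal_pair = frame +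
  fixes X Y :: "real^3 \<Rightarrow> real^3" and p :: "real^3"
  assumes smooth_X: "smooth_on X U" and smooth_Y: "smooth_on Y U" and p_in_U: "p \<in> U"
    and X_horizontal: "X p \<bullet> \<theta>0 p = 0" and Y_horizontal: "Y p \<bullet> \<theta>0 p = 0"
begin

text \<open>The sub-Riemannian inner product with \<open>X p\<close>; it equals \<open>g\<^sup>\<epsilon>(\<cdot>, X p)\<close> for every \<open>\<epsilon>\<close>
  because \<open>X p\<close> is horizontal.\<close>

definition gX :: "real^3 \<Rightarrow> real" where
  "gX w = (w \<bullet> \<theta>1 p) * (\<theta>1 p \<bullet> X p) + (w \<bullet> \<theta>2 p) * (\<theta>2 p \<bullet> X p)"

definition hdet :: real where
  "hdet = (\<theta>1 p \<bullet> X p) * (\<theta>2 p \<bullet> Y p) - (\<theta>2 p \<bullet> X p) * (\<theta>1 p \<bullet> Y p)"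

definition curv_vec :: "real \<Rightarrow> real^3" where
  "curv_vec \<epsilon> = nabla (g_eps \<epsilon> X0 X1 X2) X (nabla (g_eps \<epsilon> X0 X1 X2) Y Y) p
     - nabla (g_eps \<epsilon> X0 X1 X2) Y (nabla (g_eps \<epsilon> X0 X1 X2) X Y) p
     - nabla (g_eps \<epsilon> X0 X1 X2) (lie X Y) Y p"

definition curv_lead :: "real^3" where
  "curv_lead = (Df (\<lambda>x. christ_inv_sq x (Y x) (Y x)) p (X p)
        + christ_inv_sq p (X p) (Df Y p (Y p) + christ_const p (Y p) (Y p)))
      - (Df (\<lambda>x. christ_inv_sq x (X x) (Y x)) p (Y p)
        + christ_inv_sq p (Y p) (Df Y p (X p) + christ_const p (X p) (Y p)))
      - christ_inv_sq p (lie X Y p) (Y p)"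

lemma ip_g_eps_X: "ip (g_eps \<epsilon> X0 X1 X2) p w (X p) = gX w"
  unfolding ip_g_eps[OF p_in_U] gX_def using X_horizontal by (simp add: inner_commute)

lemma linear_gX: "linear gX"
  unfolding gX_def by (rule linearI) (simp_all add: inner_add_left algebra_simps)

lemma gram_g_eps:
  "ip (g_eps \<epsilon> X0 X1 X2) p (X p) (X p) * ip (g_eps \<epsilon> X0 X1 X2) p (Y p) (Y p)
     - (ip (g_eps \<epsilon> X0 X1 X2) p (X p) (Y p))\<^sup>2 = hdet\<^sup>2"
  unfolding ip_g_eps[OF p_in_U] hdet_def using X_horizontal Y_horizontal
  by (simp add: inner_commute power2_eq_square algebra_simps)

lemma K_ext_eq: "K_ext (g_eps \<epsilon> X0 X1 X2) X Y p = gX (curv_vec \<epsilon>) / hdet\<^sup>2"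
  unfolding K_ext_def gram_g_eps by (simp only: ip_g_eps_X curv_vec_def)

lemma X_expansion: "X p = (\<theta>1 p \<bullet> X p) *\<^sub>R X1 p + (\<theta>2 p \<bullet> X p) *\<^sub>R X2 p"
  and Y_expansion: "Y p = (\<theta>1 p \<bullet> Y p) *\<^sub>R X1 p + (\<theta>2 p \<bullet> Y p) *\<^sub>R X2 p"
  using horizontal_frame_expansion[OF p_in_U] X_horizontal Y_horizontal by blast+

lemma hdet_nonzero:
  assumes "independent {X p, Y p}" "X p \<noteq> Y p"
  shows "hdet \<noteq> 0"
proof
  assume hdet: "hdet = 0"
  define a1 a2 b1 b2 where "a1 = \<theta>1 p \<bullet> X p" "a2 = \<theta>2 p \<bullet> X p" "b1 = \<theta>1 p \<bullet> Y p" "b2 = \<theta>2 p \<bullet> Y p"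
  have X: "X p = a1 *\<^sub>R X1 p + a2 *\<^sub>R X2 p" and Y: "Y p = b1 *\<^sub>R X1 p + b2 *\<^sub>R X2 p"
    unfolding a1_a2_b1_b2_def by (fact X_expansion Y_expansion)+
  have "b2 *\<^sub>R X p + (- a2) *\<^sub>R Y p = hdet *\<^sub>R X1 p" "b1 *\<^sub>R X p + (- a1) *\<^sub>R Y p = (- hdet) *\<^sub>R X2 p"
    unfolding hdet_def a1_a2_b1_b2_def[symmetric] unfolding X Y by (simp_all add: algebra_simps)
  then have "a1 = 0" "a2 = 0"
    using independent_pair_coeffs_zero[OF assms, of b2 "- a2"] independent_pair_coeffs_zero[OF assms, of b1 "- a1"]
      hdet by simp_all
  then have "X p = 0"
    using X by simp
  then show False
    using assms(1) dependent_zero[of "{X p, Y p}"] by simp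
qed

lemma dform_XY: "dform \<theta>0 p (X p) (Y p) = hdet * c0_12 X0 X1 X2 p"
proof -
  have "linear (Df \<theta>0 p)"
    by (rule linear_Df[OF smooth_coframe(1) p_in_U])
  then show ?thesis
    unfolding hdet_def dform_frame_eq_c0_12[OF p_in_U, symmetric]
    by (subst X_expansion, subst Y_expansion)
      (simp add: dform_linear dform_self dform_swap[of _ _ "X2 p"] algebra_simps)
qed

lemma eps_expansion_curv_vec: "eps_expansion curv_vec curv_lead"
proof -
  have "christ_inv_sq p (Y p) (Y p) = 0" "christ_inv_sq p (X p) (Y p) = 0"
    unfolding christ_inv_sq_eq_dsharp using X_horizontal Y_horizontal by simp_all
  from eps_expansion_diff[OF eps_expansion_diff[OF
        eps_expansion_nabla_nabla[OF p_in_U smooth_X smooth_Y smooth_Y this(1)]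
        eps_expansion_nabla_nabla[OF p_in_U smooth_Y smooth_X smooth_Y this(2)]]
      eps_expansion_nabla[OF p_in_U smooth_Y]]
  show ?thesis
    unfolding curv_vec_def[abs_def] curv_lead_def .
qed

lemma gX_dsharp: "gX (dsharp p V) = dform \<theta>0 p V (X p)"
proof -
  have "dform \<theta>0 p V (X p) = (\<theta>1 p \<bullet> X p) * dform \<theta>0 p V (X1 p) + (\<theta>2 p \<bullet> X p) * dform \<theta>0 p V (X2 p)"
    using dform_linear[OF linear_Df[OF smooth_coframe(1) p_in_U]] by (subst X_expansion) simp
  then show ?thesis
    unfolding gX_def dsharp_def using coframe_frame[OF p_in_U]
    by (simp add: inner_add_left inner_commute algebra_simps)
qed

lemma gX_christ_inv_sq:
  "gX (christ_inv_sq p u v) = ((u \<bullet> \<theta>0 p) * dform \<theta>0 p v (X p) + (v \<bullet> \<theta>0 p) * dform \<theta>0 p u (X p)) / 2"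
  unfolding christ_inv_sq_eq_dsharp linear_scale[OF linear_gX] linear_add[OF linear_gX] gX_dsharp
  by (simp add: algebra_simps add_divide_distrib)

text \<open>Each of the five terms of \<open>curv_lead\<close> is a multiple of \<open>d\<theta>0(Y,X)\<close>; the derivatives of
  \<open>\<theta>0(Y)\<close> along \<open>X\<close> and of \<open>\<theta>0(X)\<close> along \<open>Y\<close> cancel against the Lie bracket term.\<close>

lemma gX_curv_lead: "gX curv_lead = - 3/4 * (dform \<theta>0 p (X p) (Y p))\<^sup>2"
proof -
  define \<alpha> where "\<alpha> = Df \<theta>0 p (X p) \<bullet> Y p"
  define \<beta> where "\<beta> = Df \<theta>0 p (Y p) \<bullet> X p"
  define yx where "yx = Df Y p (X p) \<bullet> \<theta>0 p"
  define xy where "xy = Df X p (Y p) \<bullet> \<theta>0 p"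
  have dform_YX: "dform \<theta>0 p (Y p) (X p) = \<beta> - \<alpha>" and dform_XY_eq: "dform \<theta>0 p (X p) (Y p) = \<alpha> - \<beta>"
    unfolding dform_def \<alpha>_def \<beta>_def by simp_all
  note gX_lin = linear_add[OF linear_gX] linear_diff[OF linear_gX] linear_scale[OF linear_gX]
  have deriv_YY: "gX (Df (\<lambda>x. christ_inv_sq x (Y x) (Y x)) p (X p)) = (yx + \<alpha>) * (\<beta> - \<alpha>)"
    unfolding Df_christ_inv_sq[OF p_in_U smooth_Y smooth_Y Y_horizontal Y_horizontal] gX_lin gX_dsharp dform_YX
    by (simp add: yx_def \<alpha>_def inner_commute algebra_simps)
  have lead_YY: "gX (christ_inv_sq p (X p) (Df Y p (Y p) + christ_const p (Y p) (Y p))) = 0"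
    unfolding gX_christ_inv_sq X_horizontal dform_self by simp
  have deriv_XY: "gX (Df (\<lambda>x. christ_inv_sq x (X x) (Y x)) p (Y p)) = (xy + \<beta>) * (\<beta> - \<alpha>) / 2"
    unfolding Df_christ_inv_sq[OF p_in_U smooth_X smooth_Y X_horizontal Y_horizontal] gX_lin gX_dsharp
      dform_YX dform_self
    by (simp add: xy_def \<beta>_def inner_commute algebra_simps)
  have "(Df Y p (X p) + christ_const p (X p) (Y p)) \<bullet> \<theta>0 p = yx + (\<beta> + \<alpha>) / 2"
    unfolding inner_add_left inner_christ_const_\<theta>0[OF p_in_U] dmix_def dsym_def X_horizontal Y_horizontal
    by (simp add: yx_def \<alpha>_def \<beta>_def inner_commute)
  then have lead_XY: "gX (christ_inv_sq p (Y p) (Df Y p (X p) + christ_const p (X p) (Y p)))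
      = (yx + (\<beta> + \<alpha>) / 2) * (\<beta> - \<alpha>) / 2"
    unfolding gX_christ_inv_sq Y_horizontal dform_YX by simp
  have "lie X Y p = Df Y p (X p) - Df X p (Y p)"
    unfolding lie_def dird_eq_Df[OF smooth_Y p_in_U] dird_eq_Df[OF smooth_X p_in_U] ..
  then have bracket: "gX (christ_inv_sq p (lie X Y p) (Y p)) = (yx - xy) * (\<beta> - \<alpha>) / 2"
    unfolding gX_christ_inv_sq Y_horizontal dform_YX by (simp add: inner_diff_left yx_def xy_def)
  show ?thesis
    unfolding curv_lead_def gX_lin deriv_YY lead_YY deriv_XY lead_XY bracket dform_XY_eq
    by (simp add: power2_eq_square field_simps)
qed

lemma K_ext_asymptotics:
  assumes "hdet \<noteq> 0"
  shows "(\<lambda>\<epsilon>. K_ext (g_eps \<epsilon> X0 X1 X2) X Y p + 3 / (4 * \<epsilon>\<^sup>2) * (c0_12 X0 X1 X2 p)\<^sup>2)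
    \<in> O[at_right 0](\<lambda>_. 1)"
proof -
  have "linear (\<lambda>w. gX w / hdet\<^sup>2)"
    by (rule linearI) (simp_all add: linear_add[OF linear_gX] linear_scale[OF linear_gX] add_divide_distrib)
  from eps_expansion_linear[OF this eps_expansion_curv_vec]
  have "eps_expansion (\<lambda>\<epsilon>. K_ext (g_eps \<epsilon> X0 X1 X2) X Y p) (- 3/4 * (c0_12 X0 X1 X2 p)\<^sup>2)"
    unfolding K_ext_eq gX_curv_lead dform_XY using assms by (simp add: power_mult_distrib)
  from eps_expansion_bigo[OF this] show ?thesis
    by simp
qed

end

theorem lemma3p2:
  fixes U S :: "(real^3) set" and p :: "real^3"
    and X0 X1 X2 X Y :: "real^3 \<Rightarrow> real^3"
  assumes "open U" and "p \<in> U"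
    and "smooth_on X0 U" and "smooth_on X1 U" and "smooth_on X2 U"
    and "\<And>x. x \<in> U \<Longrightarrow> invertible (frame_mat X0 X1 X2 x)"
    and "\<And>x. x \<in> U \<Longrightarrow> c0_12 X0 X1 X2 x \<noteq> 0"
    and "embedded_C2_surface S" and "p \<in> S"
    and "tangent_space S p = span {X1 p, X2 p}"
    and "smooth_on X U" and "smooth_on Y U"
    and "independent {X p, Y p}" and "X p \<noteq> Y p"
    and "span {X p, Y p} = tangent_space S p"
  shows "(\<lambda>\<epsilon>. K_ext (g_eps \<epsilon> X0 X1 X2) X Y p + 3 / (4 * \<epsilon>\<^sup>2) * (c0_12 X0 X1 X2 p)\<^sup>2)
           \<in> O[at_right 0](\<lambda>_. 1)"
proof -
  txt \<open>The surface enters only through the characteristic condition, which makes \<open>X p\<close> and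
    \<open>Y p\<close> horizontal.\<close>
  interpret frame U X0 X1 X2
    by unfold_locales (use assms in auto)
  have "X p \<in> span {X1 p, X2 p}" "Y p \<in> span {X1 p, X2 p}"
    using assms(10,15) by (auto intro: span_base)
  then interpret horizontal_pair U X0 X1 X2 X Y p
    using assms(2,11,12) by unfold_locales (auto intro: horizontal_if_in_span)
  show ?thesis
    using K_ext_asymptotics hdet_nonzero assms(13,14) by blast
qed

end
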